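(* Let $N\in\mathbb{N}$, $\gamma_1,\dots,\gamma_N\ge 0$, and let $\Phi_1,\dots,\Phi_N$ be independent random variables where $\Phi_i$ has the law of $Y_i\bmod 2\pi$ with $Y_i\sim\mathcal{N}(0,\gamma_i)$. For $\mathcal{S}\subseteq[N]:=\{1,\dots,N\}$ let $\overline{G}(\mathcal{S}):=\sum_{i\in\mathcal{S}}\sum_{j\in\mathcal{S}}\cos(\Phi_i-\Phi_j)$. Then both set functions $\mathcal{S}\mapsto\mathbb{E}[\overline{G}(\mathcal{S})]$ and $\mathcal{S}\mapsto\mathrm{Var}(\overline{G}(\mathcal{S}))$ on $2^{[N]}$ are supermodular.
   Context: A set function $f:2^{\Omega}\to\mathbb{R}$ is submodular if for all $X\subseteq Y\subseteq\Omega$ and every $e\in\Omega\setminus Y$, $f(X\cup\{e\})-f(X)\ge f(Y\cup\{e\})-f(Y)$; $f$ is supermodular if $-f$ is submodular. $\overline{G}(\mathcal{S})$ is the beamforming gain of the subset $\mathcal{S}$ of agents, $\gamma_i$ the effective localization error and $\Phi_i$ the wrapped normal total phase of agent $i$. *)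

theory Defs
  imports "HOL-Probability.Probability"
begin

definition gaussian_law :: "real \<Rightarrow> real measure" where
  "gaussian_law gam =
     (if gam = 0 then return borel 0
      else density lborel (\<lambda>x. ennreal (normal_density 0 (sqrt gam) x)))"

definition mod_2pi :: "real \<Rightarrow> real" where
  "mod_2pi y = y - 2 * pi * real_of_int \<lfloor>y / (2 * pi)\<rfloor>"

definition wrapped_normal :: "real \<Rightarrow> real measure" where
  "wrapped_normal gam = distr (gaussian_law gam) borel mod_2pi"

definition beam_gain :: "(nat \<Rightarrow> 'a \<Rightarrow> real) \<Rightarrow> nat set \<Rightarrow> 'a \<Rightarrow> real" where
  "beam_gain \<Phi> S \<omega> = (\<Sum>i\<in>S. \<Sum>j\<in>S. cos (\<Phi> i \<omega> - \<Phi> j \<omega>))"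

definition submodular_on :: "'b set \<Rightarrow> ('b set \<Rightarrow> real) \<Rightarrow> bool" where
  "submodular_on \<Omega> f \<longleftrightarrow>
     (\<forall>X Y e. X \<subseteq> Y \<and> Y \<subseteq> \<Omega> \<and> e \<in> \<Omega> - Y \<longrightarrow>
        f (X \<union> {e}) - f X \<ge> f (Y \<union> {e}) - f Y)"

definition supermodular_on :: "'b set \<Rightarrow> ('b set \<Rightarrow> real) \<Rightarrow> bool" where
  "supermodular_on \<Omega> f \<longleftrightarrow> submodular_on \<Omega> (\<lambda>S. - f S)"

end

theory Submission
  imports Defs
begin

(* Write u_k = exp (i Phi_k) and U_S for the sum of the u_k over S, so that G(S) = |U_S|^2 and
   G(S+e+f) - G(S+e) - G(S+f) + G(S) = 2 cos (Phi_e - Phi_f) = 2 <u_e, u_f>; on a finite ground set,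
   supermodularity amounts to nonnegativity of such second differences.
   The wrapped normal law has the real, nonnegative first trigonometric moment
   E u_k = exp (-gamma_k / 2), so by independence E <u_e, u_f> = <E u_e, E u_f> >= 0.
   The second difference of the variance expands into covariances Cov(<X,Y>, <Y,Z>) of independent
   X, Y, Z with real means E X, E Z, each equal to Re (E X) Re (E Z) Var (Re Y) >= 0, the covariance
   of |U_S|^2 with <u_e, u_f>, which vanishes by independence, and Var <u_e, u_f> >= 0. *)

context prob_space
begin

definition bounded_rv :: "('a \<Rightarrow> 'b::{banach, second_countable_topology}) \<Rightarrow> bool" where
  "bounded_rv X \<longleftrightarrow> X \<in> borel_measurable M \<and> (\<exists>B. \<forall>\<omega>\<in>space M. norm (X \<omega>) \<le> B)"

lemma bounded_rvI:
  "X \<in> borel_measurable M \<Longrightarrow> (\<And>\<omega>. \<omega> \<in> space M \<Longrightarrow> norm (X \<omega>) \<le> B) \<Longrightarrow> bounded_rv X"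
  unfolding bounded_rv_def by blast

lemma bounded_rv_integrable [simp]: "bounded_rv X \<Longrightarrow> integrable M X"
  unfolding bounded_rv_def by (auto intro!: integrable_const_bound AE_I2)

lemma bounded_rv_measurable [measurable_dest]: "bounded_rv X \<Longrightarrow> X \<in> borel_measurable M"
  unfolding bounded_rv_def by blast

lemma bounded_rv_const [simp]: "bounded_rv (\<lambda>\<omega>. c)"
  by (rule bounded_rvI[of _ "norm c"]) auto

lemma bounded_rv_add [simp]:
  assumes "bounded_rv X" "bounded_rv Y" shows "bounded_rv (\<lambda>\<omega>. X \<omega> + Y \<omega>)"
proof -
  obtain A B where "\<forall>\<omega>\<in>space M. norm (X \<omega>) \<le> A" "\<forall>\<omega>\<in>space M. norm (Y \<omega>) \<le> B"
    using assms unfolding bounded_rv_def by blast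
  then show ?thesis
    using assms by (intro bounded_rvI[of _ "A + B"])
      (auto intro: norm_triangle_le add_mono)
qed

lemma bounded_rv_mult [simp]:
  fixes X Y :: "'a \<Rightarrow> 'b::{real_normed_algebra, banach, second_countable_topology}"
  assumes "bounded_rv X" "bounded_rv Y" shows "bounded_rv (\<lambda>\<omega>. X \<omega> * Y \<omega>)"
proof -
  obtain A B where A: "\<forall>\<omega>\<in>space M. norm (X \<omega>) \<le> A" and B: "\<forall>\<omega>\<in>space M. norm (Y \<omega>) \<le> B"
    using assms unfolding bounded_rv_def by blast
  have "norm (X \<omega> * Y \<omega>) \<le> A * B" if "\<omega> \<in> space M" for \<omega>
    using A B that norm_mult_ineq[of "X \<omega>" "Y \<omega>"]
    by (smt (verit, best) mult_mono norm_ge_zero)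
  then show ?thesis
    using assms by (intro bounded_rvI[of _ "A * B"]) auto
qed

lemma bounded_rv_sum [simp]:
  "(\<And>k. k \<in> K \<Longrightarrow> bounded_rv (X k)) \<Longrightarrow> bounded_rv (\<lambda>\<omega>. \<Sum>k\<in>K. X k \<omega>)"
  by (induction K rule: infinite_finite_induct) auto

lemma bounded_rv_bounded_linear:
  assumes "bounded_linear T" "bounded_rv X" shows "bounded_rv (\<lambda>\<omega>. T (X \<omega>))"
proof -
  obtain B where B: "\<forall>\<omega>\<in>space M. norm (X \<omega>) \<le> B"
    using assms unfolding bounded_rv_def by blast
  obtain K where K: "\<And>x. norm (T x) \<le> norm x * K" "K \<ge> 0"
    using bounded_linear.nonneg_bounded[OF assms(1)] by blast
  show ?thesis
    using assms B K by (intro bounded_rvI[of _ "B * K"])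
      (auto simp: bounded_rv_measurable intro: order_trans[OF K(1)] mult_right_mono
        borel_measurable_continuous_on[OF linear_continuous_on])
qed

lemma bounded_rv_Re [simp]: "bounded_rv X \<Longrightarrow> bounded_rv (\<lambda>\<omega>. Re (X \<omega>))"
  and bounded_rv_Im [simp]: "bounded_rv X \<Longrightarrow> bounded_rv (\<lambda>\<omega>. Im (X \<omega>))"
  by (simp_all add: bounded_rv_bounded_linear bounded_linear_Re bounded_linear_Im)

lemma bounded_rv_cis [simp]: "X \<in> borel_measurable M \<Longrightarrow> bounded_rv (\<lambda>\<omega>. cis (X \<omega>))"
  by (rule bounded_rvI[of _ 1]) (auto simp: cis_conv_exp)

lemma bounded_rv_inner [simp]:
  fixes X Y :: "'a \<Rightarrow> complex"
  shows "bounded_rv X \<Longrightarrow> bounded_rv Y \<Longrightarrow> bounded_rv (\<lambda>\<omega>. X \<omega> \<bullet> Y \<omega>)"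
  by (simp add: inner_complex_def)

lemma expectation_Re: "integrable M X \<Longrightarrow> expectation (\<lambda>\<omega>. Re (X \<omega>)) = Re (expectation X)"
  and expectation_Im: "integrable M X \<Longrightarrow> expectation (\<lambda>\<omega>. Im (X \<omega>)) = Im (expectation X)"
  by (simp_all add: integral_bounded_linear bounded_linear_Re bounded_linear_Im)

definition covariance :: "('a \<Rightarrow> real) \<Rightarrow> ('a \<Rightarrow> real) \<Rightarrow> real" where
  "covariance X Y = expectation (\<lambda>\<omega>. (X \<omega> - expectation X) * (Y \<omega> - expectation Y))"

lemma variance_eq_covariance: "variance X = covariance X X"
  by (simp add: covariance_def power2_eq_square)

lemma covariance_commute: "covariance X Y = covariance Y X"
  by (simp add: covariance_def mult.commute)

lemma covariance_eq:
  assumes "bounded_rv X" "bounded_rv Y"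
  shows "covariance X Y = expectation (\<lambda>\<omega>. X \<omega> * Y \<omega>) - expectation X * expectation Y"
  using assms by (simp add: covariance_def left_diff_distrib right_diff_distrib prob_space)

lemma covariance_add_left:
  assumes "bounded_rv X" "bounded_rv Y" "bounded_rv Z"
  shows "covariance (\<lambda>\<omega>. X \<omega> + Y \<omega>) Z = covariance X Z + covariance Y Z"
  using assms by (simp add: covariance_eq distrib_right)

lemma covariance_add_right:
  assumes "bounded_rv X" "bounded_rv Y" "bounded_rv Z"
  shows "covariance Z (\<lambda>\<omega>. X \<omega> + Y \<omega>) = covariance Z X + covariance Z Y"
  using covariance_add_left[OF assms] by (simp add: covariance_commute)

lemma covariance_affine_left:
  assumes "bounded_rv X"
  shows "covariance (\<lambda>\<omega>. c * X \<omega> + d) Y = c * covariance X Y"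
proof -
  have mean: "expectation (\<lambda>\<omega>. c * X \<omega> + d) = c * expectation X + d"
    using assms by (simp add: prob_space)
  have "(\<lambda>\<omega>. (c * X \<omega> + d - expectation (\<lambda>\<omega>. c * X \<omega> + d)) * (Y \<omega> - expectation Y))
      = (\<lambda>\<omega>. c * ((X \<omega> - expectation X) * (Y \<omega> - expectation Y)))"
    unfolding mean by (simp add: fun_eq_iff algebra_simps)
  then show ?thesis
    by (simp add: covariance_def)
qed

lemma covariance_affine_right:
  "bounded_rv X \<Longrightarrow> covariance Y (\<lambda>\<omega>. c * X \<omega> + d) = c * covariance Y X"
  using covariance_affine_left[of X c d Y] by (simp add: covariance_commute)

lemma variance_second_difference:
  assumes "bounded_rv P" "bounded_rv A" "bounded_rv B" "bounded_rv C"
  shows "variance (\<lambda>\<omega>. P \<omega> + A \<omega> + B \<omega> + C \<omega>) - variance (\<lambda>\<omega>. P \<omega> + A \<omega>)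
           - variance (\<lambda>\<omega>. P \<omega> + B \<omega>) + variance P
         = 2 * covariance A B + 2 * covariance P C + 2 * covariance A C + 2 * covariance B C
           + variance C"
proof -
  have "covariance B A = covariance A B" "covariance C P = covariance P C"
    "covariance C A = covariance A C" "covariance C B = covariance B C"
    "covariance A P = covariance P A" "covariance B P = covariance P B"
    by (simp_all add: covariance_commute)
  moreover have "bounded_rv (\<lambda>\<omega>. P \<omega> + A \<omega>)" "bounded_rv (\<lambda>\<omega>. P \<omega> + B \<omega>)"
    "bounded_rv (\<lambda>\<omega>. P \<omega> + A \<omega> + B \<omega>)" "bounded_rv (\<lambda>\<omega>. P \<omega> + A \<omega> + B \<omega> + C \<omega>)"
    using assms by simp_all
  ultimately show ?thesis
    using assms unfolding variance_eq_covariance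
    by (simp only: covariance_add_left covariance_add_right)
qed

end

section \<open>Expectations of products of independent random variables\<close>

context prob_space
begin

lemma indep_vars_expectation_prod:
  fixes V :: "'i \<Rightarrow> 'a \<Rightarrow> 'b::topological_space" and f :: "'i \<Rightarrow> 'b \<Rightarrow> real"
  assumes "indep_vars (\<lambda>_. borel) V I" "J \<subseteq> I" "finite J"
    and "\<And>j. j \<in> J \<Longrightarrow> f j \<in> borel_measurable borel"
    and "\<And>j. j \<in> J \<Longrightarrow> integrable M (\<lambda>\<omega>. f j (V j \<omega>))"
  shows "expectation (\<lambda>\<omega>. \<Prod>j\<in>J. f j (V j \<omega>)) = (\<Prod>j\<in>J. expectation (\<lambda>\<omega>. f j (V j \<omega>)))"
proof -
  have "indep_vars (\<lambda>_. borel) (\<lambda>j \<omega>. f j (V j \<omega>)) J"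
    using indep_vars_compose2[OF indep_vars_subset[OF assms(1,2)], of f "\<lambda>_. borel"] assms(4)
    by simp
  from indep_vars_lebesgue_integral[OF assms(3) this] assms(5) show ?thesis by simp
qed

lemma indep_vars_expectation_mult:
  fixes V :: "'i \<Rightarrow> 'a \<Rightarrow> 'b::topological_space" and f g :: "'b \<Rightarrow> real"
  assumes "indep_vars (\<lambda>_. borel) V I" "i \<in> I" "j \<in> I" "i \<noteq> j"
    and "f \<in> borel_measurable borel" "g \<in> borel_measurable borel"
    and "integrable M (\<lambda>\<omega>. f (V i \<omega>))" "integrable M (\<lambda>\<omega>. g (V j \<omega>))"
  shows "expectation (\<lambda>\<omega>. f (V i \<omega>) * g (V j \<omega>))
       = expectation (\<lambda>\<omega>. f (V i \<omega>)) * expectation (\<lambda>\<omega>. g (V j \<omega>))"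
proof -
  let ?F = "\<lambda>l. if l = i then f else g"
  have "expectation (\<lambda>\<omega>. \<Prod>l\<in>{i, j}. ?F l (V l \<omega>)) = (\<Prod>l\<in>{i, j}. expectation (\<lambda>\<omega>. ?F l (V l \<omega>)))"
    using assms by (intro indep_vars_expectation_prod[OF assms(1)]) auto
  then show ?thesis
    using \<open>i \<noteq> j\<close> by simp
qed

lemma indep_vars_expectation_mult3:
  fixes V :: "'i \<Rightarrow> 'a \<Rightarrow> 'b::topological_space" and f g h :: "'b \<Rightarrow> real"
  assumes "indep_vars (\<lambda>_. borel) V I" "i \<in> I" "j \<in> I" "k \<in> I" "distinct [i, j, k]"
    and "f \<in> borel_measurable borel" "g \<in> borel_measurable borel" "h \<in> borel_measurable borel"
    and "integrable M (\<lambda>\<omega>. f (V i \<omega>))" "integrable M (\<lambda>\<omega>. g (V j \<omega>))"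
      "integrable M (\<lambda>\<omega>. h (V k \<omega>))"
  shows "expectation (\<lambda>\<omega>. f (V i \<omega>) * g (V j \<omega>) * h (V k \<omega>))
       = expectation (\<lambda>\<omega>. f (V i \<omega>)) * expectation (\<lambda>\<omega>. g (V j \<omega>))
         * expectation (\<lambda>\<omega>. h (V k \<omega>))"
proof -
  let ?F = "\<lambda>l. if l = i then f else if l = j then g else h"
  have "expectation (\<lambda>\<omega>. \<Prod>l\<in>{i, j, k}. ?F l (V l \<omega>))
      = (\<Prod>l\<in>{i, j, k}. expectation (\<lambda>\<omega>. ?F l (V l \<omega>)))"
    using assms by (intro indep_vars_expectation_prod[OF assms(1)]) auto
  moreover have "j \<noteq> i" "k \<noteq> i" "k \<noteq> j"
    using \<open>distinct [i, j, k]\<close> by auto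
  ultimately show ?thesis
    by (simp add: mult.assoc)
qed

lemma indep_vars_expectation_inner:
  fixes V :: "'i \<Rightarrow> 'a \<Rightarrow> complex"
  assumes indep: "indep_vars (\<lambda>_. borel) V I" and bounded: "\<And>l. l \<in> I \<Longrightarrow> bounded_rv (V l)"
    and "i \<in> I" "j \<in> I" "i \<noteq> j"
  shows "expectation (\<lambda>\<omega>. V i \<omega> \<bullet> V j \<omega>) = expectation (V i) \<bullet> expectation (V j)"
proof -
  have Vi: "bounded_rv (V i)" and Vj: "bounded_rv (V j)"
    using bounded \<open>i \<in> I\<close> \<open>j \<in> I\<close> by auto
  have "expectation (\<lambda>\<omega>. Re (V i \<omega>) * Re (V j \<omega>))
      = expectation (\<lambda>\<omega>. Re (V i \<omega>)) * expectation (\<lambda>\<omega>. Re (V j \<omega>))"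
    using assms Vi Vj by (intro indep_vars_expectation_mult[where f = Re and g = Re]) auto
  moreover have "expectation (\<lambda>\<omega>. Im (V i \<omega>) * Im (V j \<omega>))
      = expectation (\<lambda>\<omega>. Im (V i \<omega>)) * expectation (\<lambda>\<omega>. Im (V j \<omega>))"
    using assms Vi Vj by (intro indep_vars_expectation_mult[where f = Im and g = Im]) auto
  ultimately show ?thesis
    using Vi Vj by (simp add: inner_complex_def expectation_Re expectation_Im)
qed

lemma indep_vars_covariance_inner_eq_0:
  fixes V :: "'i \<Rightarrow> 'a \<Rightarrow> complex" and f :: "complex \<Rightarrow> real"
  assumes indep: "indep_vars (\<lambda>_. borel) V I" and bounded: "\<And>l. l \<in> I \<Longrightarrow> bounded_rv (V l)"
    and "i \<in> I" "j \<in> I" "k \<in> I" "distinct [i, j, k]"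
    and "f \<in> borel_measurable borel" "bounded_rv (\<lambda>\<omega>. f (V i \<omega>))"
  shows "covariance (\<lambda>\<omega>. f (V i \<omega>)) (\<lambda>\<omega>. V j \<omega> \<bullet> V k \<omega>) = 0"
proof -
  have Vj: "bounded_rv (V j)" and Vk: "bounded_rv (V k)"
    using bounded assms(4,5) by auto
  have "expectation (\<lambda>\<omega>. f (V i \<omega>) * Re (V j \<omega>) * Re (V k \<omega>))
      = expectation (\<lambda>\<omega>. f (V i \<omega>)) * expectation (\<lambda>\<omega>. Re (V j \<omega>))
        * expectation (\<lambda>\<omega>. Re (V k \<omega>))"
    using assms Vj Vk by (intro indep_vars_expectation_mult3[where g = Re and h = Re]) auto
  moreover have "expectation (\<lambda>\<omega>. f (V i \<omega>) * Im (V j \<omega>) * Im (V k \<omega>))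
      = expectation (\<lambda>\<omega>. f (V i \<omega>)) * expectation (\<lambda>\<omega>. Im (V j \<omega>))
        * expectation (\<lambda>\<omega>. Im (V k \<omega>))"
    using assms Vj Vk by (intro indep_vars_expectation_mult3[where g = Im and h = Im]) auto
  moreover have "expectation (\<lambda>\<omega>. V j \<omega> \<bullet> V k \<omega>) = expectation (V j) \<bullet> expectation (V k)"
    using assms by (intro indep_vars_expectation_inner) auto
  moreover have "(\<lambda>\<omega>. f (V i \<omega>) * (V j \<omega> \<bullet> V k \<omega>))
      = (\<lambda>\<omega>. f (V i \<omega>) * Re (V j \<omega>) * Re (V k \<omega>) + f (V i \<omega>) * Im (V j \<omega>) * Im (V k \<omega>))"
    by (simp add: fun_eq_iff inner_complex_def algebra_simps)
  ultimately show ?thesis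
    using assms(8) Vj Vk
    by (simp add: covariance_eq inner_complex_def expectation_Re expectation_Im algebra_simps)
qed

lemma indep_vars_covariance_inner_shared:
  fixes V :: "'i \<Rightarrow> 'a \<Rightarrow> complex"
  assumes indep: "indep_vars (\<lambda>_. borel) V I" and bounded: "\<And>l. l \<in> I \<Longrightarrow> bounded_rv (V l)"
    and "i \<in> I" "j \<in> I" "k \<in> I" "distinct [i, j, k]"
    and real_i: "Im (expectation (V i)) = 0" and real_k: "Im (expectation (V k)) = 0"
  shows "covariance (\<lambda>\<omega>. V i \<omega> \<bullet> V j \<omega>) (\<lambda>\<omega>. V j \<omega> \<bullet> V k \<omega>)
       = Re (expectation (V i)) * Re (expectation (V k)) * variance (\<lambda>\<omega>. Re (V j \<omega>))"
proof -
  have Vi: "bounded_rv (V i)" and Vj: "bounded_rv (V j)" and Vk: "bounded_rv (V k)"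
    using bounded assms(3-5) by auto
  have mult3: "expectation (\<lambda>\<omega>. f (V i \<omega>) * g (V j \<omega>) * h (V k \<omega>))
      = expectation (\<lambda>\<omega>. f (V i \<omega>)) * expectation (\<lambda>\<omega>. g (V j \<omega>))
        * expectation (\<lambda>\<omega>. h (V k \<omega>))"
    if "f \<in> {Re, Im}" "g \<in> borel_measurable borel" "bounded_rv (\<lambda>\<omega>. g (V j \<omega>))"
      "h \<in> {Re, Im}"
    for f g h :: "complex \<Rightarrow> real"
    using that assms Vi Vk by (intro indep_vars_expectation_mult3) auto
  have "expectation (\<lambda>\<omega>. (V i \<omega> \<bullet> V j \<omega>) * (V j \<omega> \<bullet> V k \<omega>))
      = expectation (\<lambda>\<omega>. Re (V i \<omega>) * (Re (V j \<omega>) * Re (V j \<omega>)) * Re (V k \<omega>)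
            + Re (V i \<omega>) * (Re (V j \<omega>) * Im (V j \<omega>)) * Im (V k \<omega>)
            + Im (V i \<omega>) * (Im (V j \<omega>) * Re (V j \<omega>)) * Re (V k \<omega>)
            + Im (V i \<omega>) * (Im (V j \<omega>) * Im (V j \<omega>)) * Im (V k \<omega>))"
    by (simp add: inner_complex_def algebra_simps)
  also have "\<dots> = Re (expectation (V i)) * expectation (\<lambda>\<omega>. Re (V j \<omega>) * Re (V j \<omega>))
      * Re (expectation (V k))"
    using Vi Vj Vk real_i real_k
    by (simp add: mult3[of Re "\<lambda>z. Re z * Re z" Re] mult3[of Re "\<lambda>z. Re z * Im z" Im]
        mult3[of Im "\<lambda>z. Im z * Re z" Re] mult3[of Im "\<lambda>z. Im z * Im z" Im]
        expectation_Re expectation_Im)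
  finally have "expectation (\<lambda>\<omega>. (V i \<omega> \<bullet> V j \<omega>) * (V j \<omega> \<bullet> V k \<omega>))
      = Re (expectation (V i)) * expectation (\<lambda>\<omega>. Re (V j \<omega>) * Re (V j \<omega>))
        * Re (expectation (V k))" .
  moreover have "expectation (\<lambda>\<omega>. V i \<omega> \<bullet> V j \<omega>) = Re (expectation (V i)) * Re (expectation (V j))"
    and "expectation (\<lambda>\<omega>. V j \<omega> \<bullet> V k \<omega>) = Re (expectation (V j)) * Re (expectation (V k))"
    using indep_vars_expectation_inner[OF indep bounded] assms by (auto simp: inner_complex_def)
  moreover have "variance (\<lambda>\<omega>. Re (V j \<omega>))
      = expectation (\<lambda>\<omega>. Re (V j \<omega>) * Re (V j \<omega>)) - (Re (expectation (V j)))\<^sup>2"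
    using Vj by (subst variance_eq) (simp_all add: power2_eq_square expectation_Re)
  ultimately show ?thesis
    using Vi Vj Vk by (simp add: covariance_eq power2_eq_square prob_space algebra_simps)
qed

end

section \<open>Supermodularity via second differences\<close>

lemma supermodular_onI:
  fixes F :: "'b set \<Rightarrow> real"
  assumes "finite \<Omega>"
    and second_difference: "\<And>S e f. S \<subseteq> \<Omega> \<Longrightarrow> e \<in> \<Omega> - S \<Longrightarrow> f \<in> \<Omega> - S \<Longrightarrow> e \<noteq> f \<Longrightarrow>
       F (insert f (insert e S)) - F (insert e S) - F (insert f S) + F S \<ge> 0"
  shows "supermodular_on \<Omega> F"
proof -
  have increment_mono: "F (insert e X) - F X \<le> F (insert e (X \<union> D)) - F (X \<union> D)"
    if "finite D" "X \<subseteq> \<Omega>" "D \<subseteq> \<Omega>" "e \<in> \<Omega>" "e \<notin> X" "e \<notin> D" for D X e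
    using that
  proof (induction D rule: finite_induct)
    case (insert d D)
    show ?case
    proof (cases "d \<in> X")
      case True
      then show ?thesis
        using insert by (simp add: insert_absorb)
    next
      case False
      then have "F (insert d (insert e (X \<union> D))) - F (insert e (X \<union> D))
          - F (insert d (X \<union> D)) + F (X \<union> D) \<ge> 0"
        using second_difference[of "X \<union> D" e d] insert.prems insert.hyps by auto
      moreover have "F (insert e X) - F X \<le> F (insert e (X \<union> D)) - F (X \<union> D)"
        using insert by auto
      moreover have "insert e (X \<union> insert d D) = insert d (insert e (X \<union> D))"
        and "X \<union> insert d D = insert d (X \<union> D)"
        by auto
      ultimately show ?thesis
        by (simp only:)
    qed
  qed simp
  show ?thesis
    unfolding supermodular_on_def submodular_on_def
  proof (intro allI impI, elim conjE)
    fix X Y e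
    assume XY: "X \<subseteq> Y" "Y \<subseteq> \<Omega>" "e \<in> \<Omega> - Y"
    moreover have "finite (Y - X)"
      using XY \<open>finite \<Omega>\<close> finite_subset by blast
    ultimately have "F (insert e X) - F X \<le> F (insert e (X \<union> (Y - X))) - F (X \<union> (Y - X))"
      by (intro increment_mono) auto
    moreover have "X \<union> (Y - X) = Y"
      using XY by blast
    ultimately show "- F (X \<union> {e}) - - F X \<ge> - F (Y \<union> {e}) - - F Y"
      by simp
  qed
qed

section \<open>The characteristic function of the wrapped normal law\<close>

lemma borel_measurable_cis [measurable]: "cis \<in> borel_measurable borel"
  by (intro borel_measurable_continuous_onI continuous_on_cis continuous_on_id)

lemma integral_cis_gaussian_law:
  assumes "\<gamma> \<ge> 0"
  shows "integral\<^sup>L (gaussian_law \<gamma>) cis = of_real (exp (- \<gamma> / 2))"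
proof (cases "\<gamma> = 0")
  case True
  then show ?thesis
    by (simp add: gaussian_law_def integral_return)
next
  case False
  define s where "s = sqrt \<gamma>"
  have s: "s > 0"
    using assms False by (simp add: s_def)
  interpret std: real_distribution std_normal_distribution
    by (rule real_dist_normal_dist)
  have "distributed std_normal_distribution lborel (\<lambda>x. x) std_normal_density"
    unfolding distributed_def by (auto simp: distr_id2)
  from std.normal_density_affine[OF this, of s 0] s
  have "distributed std_normal_distribution lborel (\<lambda>x. s * x) (normal_density 0 s)"
    by simp
  then have law: "gaussian_law \<gamma> = distr std_normal_distribution lborel (\<lambda>x. s * x)"
    using False by (simp add: distributed_distr_eq_density gaussian_law_def s_def)
  have "integral\<^sup>L (gaussian_law \<gamma>) cis = (CLINT x|std_normal_distribution. cis (s * x))"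
    unfolding law by (subst integral_distr) auto
  also have "\<dots> = char std_normal_distribution s"
    by (simp add: char_def cis_conv_exp)
  also have "\<dots> = of_real (exp (- \<gamma> / 2))"
    using assms by (simp add: char_std_normal_distribution s_def)
  finally show ?thesis .
qed

lemma cis_mod_2pi [simp]: "cis (mod_2pi y) = cis y"
  by (simp add: mod_2pi_def complex_eq_iff cos_diff sin_diff)

lemma borel_measurable_mod_2pi [measurable]: "mod_2pi \<in> borel_measurable borel"
  unfolding mod_2pi_def by measurable

lemma integral_cis_wrapped_normal:
  assumes "\<gamma> \<ge> 0"
  shows "integral\<^sup>L (wrapped_normal \<gamma>) cis = of_real (exp (- \<gamma> / 2))"
proof -
  have "measurable (gaussian_law \<gamma>) borel = measurable borel (borel :: real measure)"
    by (rule measurable_cong_sets) (simp_all add: gaussian_law_def)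
  then have "mod_2pi \<in> borel_measurable (gaussian_law \<gamma>)"
    using borel_measurable_mod_2pi by simp
  then have "integral\<^sup>L (wrapped_normal \<gamma>) cis = integral\<^sup>L (gaussian_law \<gamma>) cis"
    unfolding wrapped_normal_def by (subst integral_distr) auto
  then show ?thesis
    using integral_cis_gaussian_law[OF assms] by simp
qed

section \<open>Phasor sums and the beamforming gain\<close>

definition phasor_sum :: "(nat \<Rightarrow> 'a \<Rightarrow> real) \<Rightarrow> nat set \<Rightarrow> 'a \<Rightarrow> complex" where
  "phasor_sum \<Phi> K \<omega> = (\<Sum>k\<in>K. cis (\<Phi> k \<omega>))"

lemma inner_cis: "cis x \<bullet> cis y = cos (x - y)"
  by (simp add: inner_complex_def cos_diff)

lemma beam_gain_eq_inner: "beam_gain \<Phi> S \<omega> = phasor_sum \<Phi> S \<omega> \<bullet> phasor_sum \<Phi> S \<omega>"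
  unfolding beam_gain_def phasor_sum_def inner_sum_left inner_sum_right inner_cis
  by (rule sum.swap)

lemma phasor_sum_singleton: "phasor_sum \<Phi> {k} \<omega> = cis (\<Phi> k \<omega>)"
  by (simp add: phasor_sum_def)

lemma phasor_sum_insert:
  "finite K \<Longrightarrow> k \<notin> K \<Longrightarrow> phasor_sum \<Phi> (insert k K) \<omega> = cis (\<Phi> k \<omega>) + phasor_sum \<Phi> K \<omega>"
  by (simp add: phasor_sum_def)

lemma beam_gain_insert:
  assumes "finite K" "k \<notin> K"
  shows "beam_gain \<Phi> (insert k K) \<omega>
       = beam_gain \<Phi> K \<omega> + 2 * (phasor_sum \<Phi> K \<omega> \<bullet> cis (\<Phi> k \<omega>)) + 1"
  using assms
  by (simp add: beam_gain_eq_inner phasor_sum_insert inner_add_left inner_add_right inner_commute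
      inner_cis)

lemma beam_gain_second_difference:
  assumes "finite K" "e \<notin> K" "f \<notin> K" "e \<noteq> f"
  shows "beam_gain \<Phi> (insert f (insert e K)) \<omega> - beam_gain \<Phi> (insert e K) \<omega>
           - beam_gain \<Phi> (insert f K) \<omega> + beam_gain \<Phi> K \<omega>
       = 2 * cos (\<Phi> e \<omega> - \<Phi> f \<omega>)"
  using assms
  by (simp add: beam_gain_insert phasor_sum_insert inner_add_left inner_cis)

lemma (in prob_space) indep_vars_phasor_sum:
  assumes "indep_vars (\<lambda>_. borel) \<Phi> I" "\<And>j. j \<in> J \<Longrightarrow> K j \<subseteq> I" "disjoint_family_on K J"
  shows "indep_vars (\<lambda>_. borel) (\<lambda>j. phasor_sum \<Phi> (K j)) J"
proof -
  have "indep_vars (\<lambda>_. borel)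
      (\<lambda>j \<omega>. (\<lambda>w. \<Sum>k\<in>K j. cis (w k)) (restrict (\<lambda>i. \<Phi> i \<omega>) (K j))) J"
    by (rule indep_vars_compose2[OF indep_vars_restrict[OF assms]]) measurable
  moreover have "(\<lambda>w. \<Sum>k\<in>K j. cis (w k)) (restrict (\<lambda>i. \<Phi> i \<omega>) (K j)) = phasor_sum \<Phi> (K j) \<omega>"
    for j \<omega>
    by (simp add: phasor_sum_def)
  ultimately show ?thesis
    by simp
qed

(* rho i is the first trigonometric moment E exp (i Phi_i), exp (-gamma_i / 2) for the wrapped
   normal law; its being real and nonnegative is all that is used about the laws of the phases. *)
locale indep_phases = prob_space +
  fixes \<Phi> :: "nat \<Rightarrow> 'a \<Rightarrow> real" and I :: "nat set" and \<rho> :: "nat \<Rightarrow> real"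
  assumes finite_phases: "finite I"
    and indep: "indep_vars (\<lambda>_. borel) \<Phi> I"
    and expectation_cis_phase: "\<And>i. i \<in> I \<Longrightarrow> expectation (\<lambda>\<omega>. cis (\<Phi> i \<omega>)) = of_real (\<rho> i)"
    and mean_resultant_nonneg: "\<And>i. i \<in> I \<Longrightarrow> \<rho> i \<ge> 0"
begin

lemma measurable_phase: "i \<in> I \<Longrightarrow> \<Phi> i \<in> borel_measurable M"
  using indep by (auto simp: indep_vars_def)

lemma bounded_rv_phasor_sum: "K \<subseteq> I \<Longrightarrow> bounded_rv (phasor_sum \<Phi> K)"
  unfolding phasor_sum_def[abs_def]
  by (intro bounded_rv_sum bounded_rv_cis) (auto intro: measurable_phase)

lemma bounded_rv_beam_gain: "S \<subseteq> I \<Longrightarrow> bounded_rv (beam_gain \<Phi> S)"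
  unfolding beam_gain_eq_inner[abs_def] by (simp add: bounded_rv_phasor_sum)

lemma expectation_phasor_sum:
  assumes "K \<subseteq> I"
  shows "expectation (phasor_sum \<Phi> K) = of_real (\<Sum>k\<in>K. \<rho> k)"
proof -
  have "expectation (phasor_sum \<Phi> K) = (\<Sum>k\<in>K. expectation (\<lambda>\<omega>. cis (\<Phi> k \<omega>)))"
    unfolding phasor_sum_def[abs_def] using assms measurable_phase
    by (intro Bochner_Integration.integral_sum) auto
  also have "\<dots> = of_real (\<Sum>k\<in>K. \<rho> k)"
    using assms by (simp add: expectation_cis_phase subset_iff)
  finally show ?thesis .
qed

lemma indep_phasor_blocks:
  assumes "J \<subseteq> I" "K \<subseteq> I" "L \<subseteq> I" "J \<inter> K = {}" "J \<inter> L = {}" "K \<inter> L = {}"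
  shows "indep_vars (\<lambda>_. borel) (\<lambda>n. phasor_sum \<Phi> ([J, K, L] ! n)) {0, 1, 2}"
  using assms
  by (intro indep_vars_phasor_sum[OF indep]) (auto simp: disjoint_family_on_def)

lemma bounded_rv_phasor_block:
  "J \<subseteq> I \<Longrightarrow> K \<subseteq> I \<Longrightarrow> L \<subseteq> I \<Longrightarrow> n \<in> {0, 1, 2}
    \<Longrightarrow> bounded_rv (phasor_sum \<Phi> ([J, K, L] ! n))"
  by (auto simp: bounded_rv_phasor_sum)

lemma expectation_phasor_inner:
  assumes "J \<subseteq> I" "K \<subseteq> I" "J \<inter> K = {}"
  shows "expectation (\<lambda>\<omega>. phasor_sum \<Phi> J \<omega> \<bullet> phasor_sum \<Phi> K \<omega>)
       = (\<Sum>j\<in>J. \<rho> j) * (\<Sum>k\<in>K. \<rho> k)"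
  using indep_vars_expectation_inner[OF indep_phasor_blocks[of J K "{}"] bounded_rv_phasor_block,
      of 0 1] assms
  by (simp add: bounded_rv_phasor_sum expectation_phasor_sum inner_complex_def flip: of_real_sum)

lemma covariance_phasor_inner_nonneg:
  assumes "J \<subseteq> I" "K \<subseteq> I" "L \<subseteq> I" "J \<inter> K = {}" "J \<inter> L = {}" "K \<inter> L = {}"
  shows "covariance (\<lambda>\<omega>. phasor_sum \<Phi> J \<omega> \<bullet> phasor_sum \<Phi> K \<omega>)
           (\<lambda>\<omega>. phasor_sum \<Phi> K \<omega> \<bullet> phasor_sum \<Phi> L \<omega>) \<ge> 0"
proof -
  have "covariance (\<lambda>\<omega>. phasor_sum \<Phi> J \<omega> \<bullet> phasor_sum \<Phi> K \<omega>)
           (\<lambda>\<omega>. phasor_sum \<Phi> K \<omega> \<bullet> phasor_sum \<Phi> L \<omega>)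
      = (\<Sum>j\<in>J. \<rho> j) * (\<Sum>l\<in>L. \<rho> l) * variance (\<lambda>\<omega>. Re (phasor_sum \<Phi> K \<omega>))"
    using indep_vars_covariance_inner_shared[OF indep_phasor_blocks[OF assms]
        bounded_rv_phasor_block[OF assms(1-3)], of 0 1 2] assms
    by (simp add: expectation_phasor_sum flip: of_real_sum)
  also have "\<dots> \<ge> 0"
    using assms by (intro mult_nonneg_nonneg sum_nonneg variance_positive)
      (auto intro: mean_resultant_nonneg)
  finally show ?thesis .
qed

lemma covariance_phasor_norm_inner_eq_0:
  assumes "J \<subseteq> I" "K \<subseteq> I" "L \<subseteq> I" "J \<inter> K = {}" "J \<inter> L = {}" "K \<inter> L = {}"
  shows "covariance (\<lambda>\<omega>. phasor_sum \<Phi> J \<omega> \<bullet> phasor_sum \<Phi> J \<omega>)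
           (\<lambda>\<omega>. phasor_sum \<Phi> K \<omega> \<bullet> phasor_sum \<Phi> L \<omega>) = 0"
  using indep_vars_covariance_inner_eq_0[OF indep_phasor_blocks[OF assms]
      bounded_rv_phasor_block[OF assms(1-3)], of 0 1 2 "\<lambda>z. z \<bullet> z"] assms
  by (simp add: bounded_rv_phasor_sum inner_complex_def)

context
  fixes S e f
  assumes S: "S \<subseteq> I" and e: "e \<in> I - S" and f: "f \<in> I - S" and "e \<noteq> f"
begin

lemma expectation_gain_second_difference_nonneg:
  "expectation (beam_gain \<Phi> (insert f (insert e S))) - expectation (beam_gain \<Phi> (insert e S))
     - expectation (beam_gain \<Phi> (insert f S)) + expectation (beam_gain \<Phi> S) \<ge> 0"
proof -
  have "finite S"
    using S finite_phases finite_subset by blast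
  have "expectation (beam_gain \<Phi> (insert f (insert e S))) - expectation (beam_gain \<Phi> (insert e S))
     - expectation (beam_gain \<Phi> (insert f S)) + expectation (beam_gain \<Phi> S)
     = expectation (\<lambda>\<omega>. beam_gain \<Phi> (insert f (insert e S)) \<omega> - beam_gain \<Phi> (insert e S) \<omega>
         - beam_gain \<Phi> (insert f S) \<omega> + beam_gain \<Phi> S \<omega>)"
    using S e f by (simp add: bounded_rv_beam_gain)
  also have "\<dots> = 2 * expectation (\<lambda>\<omega>. phasor_sum \<Phi> {e} \<omega> \<bullet> phasor_sum \<Phi> {f} \<omega>)"
    using \<open>finite S\<close> e f \<open>e \<noteq> f\<close>
    by (simp add: beam_gain_second_difference inner_cis phasor_sum_singleton)
  also have "\<dots> = 2 * (\<rho> e * \<rho> f)"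
    using expectation_phasor_inner[of "{e}" "{f}"] e f \<open>e \<noteq> f\<close> by simp
  also have "\<dots> \<ge> 0"
    using e f by (simp add: mean_resultant_nonneg)
  finally show ?thesis .
qed

lemma variance_gain_second_difference:
  "variance (beam_gain \<Phi> (insert f (insert e S))) - variance (beam_gain \<Phi> (insert e S))
     - variance (beam_gain \<Phi> (insert f S)) + variance (beam_gain \<Phi> S)
   = 8 * covariance (\<lambda>\<omega>. cis (\<Phi> e \<omega>) \<bullet> phasor_sum \<Phi> S \<omega>) (\<lambda>\<omega>. phasor_sum \<Phi> S \<omega> \<bullet> cis (\<Phi> f \<omega>))
     + 4 * covariance (\<lambda>\<omega>. phasor_sum \<Phi> S \<omega> \<bullet> phasor_sum \<Phi> S \<omega>)
         (\<lambda>\<omega>. cis (\<Phi> e \<omega>) \<bullet> cis (\<Phi> f \<omega>))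
     + 8 * covariance (\<lambda>\<omega>. phasor_sum \<Phi> S \<omega> \<bullet> cis (\<Phi> e \<omega>)) (\<lambda>\<omega>. cis (\<Phi> e \<omega>) \<bullet> cis (\<Phi> f \<omega>))
     + 8 * covariance (\<lambda>\<omega>. phasor_sum \<Phi> S \<omega> \<bullet> cis (\<Phi> f \<omega>)) (\<lambda>\<omega>. cis (\<Phi> f \<omega>) \<bullet> cis (\<Phi> e \<omega>))
     + 4 * variance (\<lambda>\<omega>. cis (\<Phi> e \<omega>) \<bullet> cis (\<Phi> f \<omega>))"
proof -
  let ?U = "phasor_sum \<Phi> S" and ?a = "\<lambda>\<omega>. cis (\<Phi> e \<omega>)" and ?b = "\<lambda>\<omega>. cis (\<Phi> f \<omega>)"
  define P where "P = (\<lambda>\<omega>. ?U \<omega> \<bullet> ?U \<omega>)"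
  define A where "A = (\<lambda>\<omega>. 2 * (?U \<omega> \<bullet> ?a \<omega>) + 1)"
  define B where "B = (\<lambda>\<omega>. 2 * (?U \<omega> \<bullet> ?b \<omega>) + 1)"
  define C where "C = (\<lambda>\<omega>. 2 * (?a \<omega> \<bullet> ?b \<omega>))"
  have "finite S"
    using S finite_phases finite_subset by blast
  have gains: "beam_gain \<Phi> S = P" "beam_gain \<Phi> (insert e S) = (\<lambda>\<omega>. P \<omega> + A \<omega>)"
    "beam_gain \<Phi> (insert f S) = (\<lambda>\<omega>. P \<omega> + B \<omega>)"
    "beam_gain \<Phi> (insert f (insert e S)) = (\<lambda>\<omega>. P \<omega> + A \<omega> + B \<omega> + C \<omega>)"
    using beam_gain_insert[OF \<open>finite S\<close>, of e \<Phi>] beam_gain_insert[OF \<open>finite S\<close>, of f \<Phi>]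
      beam_gain_second_difference[OF \<open>finite S\<close>, of e f \<Phi>] e f \<open>e \<noteq> f\<close>
    by (auto simp: fun_eq_iff P_def A_def B_def C_def beam_gain_eq_inner inner_cis algebra_simps)
  have U: "bounded_rv ?U" and a: "bounded_rv ?a" and b: "bounded_rv ?b"
    using S e f by (simp_all add: bounded_rv_phasor_sum measurable_phase)
  then have "bounded_rv P" "bounded_rv A" "bounded_rv B" "bounded_rv C"
    by (simp_all add: P_def A_def B_def C_def)
  from variance_second_difference[OF this] show ?thesis
    using U a b unfolding gains variance_eq_covariance
    by (simp add: P_def A_def B_def C_def covariance_affine_left covariance_affine_right
        covariance_affine_left[where d = 0, simplified] covariance_affine_right[where d = 0, simplified]
        inner_commute)
qed

lemma variance_gain_second_difference_nonneg:
  "variance (beam_gain \<Phi> (insert f (insert e S))) - variance (beam_gain \<Phi> (insert e S))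
     - variance (beam_gain \<Phi> (insert f S)) + variance (beam_gain \<Phi> S) \<ge> 0"
proof -
  have "covariance (\<lambda>\<omega>. cis (\<Phi> e \<omega>) \<bullet> phasor_sum \<Phi> S \<omega>) (\<lambda>\<omega>. phasor_sum \<Phi> S \<omega> \<bullet> cis (\<Phi> f \<omega>)) \<ge> 0"
    and "covariance (\<lambda>\<omega>. phasor_sum \<Phi> S \<omega> \<bullet> phasor_sum \<Phi> S \<omega>)
      (\<lambda>\<omega>. cis (\<Phi> e \<omega>) \<bullet> cis (\<Phi> f \<omega>)) = 0"
    and "covariance (\<lambda>\<omega>. phasor_sum \<Phi> S \<omega> \<bullet> cis (\<Phi> e \<omega>)) (\<lambda>\<omega>. cis (\<Phi> e \<omega>) \<bullet> cis (\<Phi> f \<omega>)) \<ge> 0"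
    and "covariance (\<lambda>\<omega>. phasor_sum \<Phi> S \<omega> \<bullet> cis (\<Phi> f \<omega>)) (\<lambda>\<omega>. cis (\<Phi> f \<omega>) \<bullet> cis (\<Phi> e \<omega>)) \<ge> 0"
    using covariance_phasor_inner_nonneg[of "{e}" S "{f}"]
      covariance_phasor_norm_inner_eq_0[of S "{e}" "{f}"]
      covariance_phasor_inner_nonneg[of S "{e}" "{f}"] covariance_phasor_inner_nonneg[of S "{f}" "{e}"]
      S e f \<open>e \<noteq> f\<close>
    by (auto simp: phasor_sum_singleton)
  then show ?thesis
    unfolding variance_gain_second_difference
    using variance_positive[of "\<lambda>\<omega>. cis (\<Phi> e \<omega>) \<bullet> cis (\<Phi> f \<omega>)"] by linarith
qed

end

end

theorem theorem2:
  fixes M :: "'a measure" and \<Phi> :: "nat \<Rightarrow> 'a \<Rightarrow> real"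
    and \<gamma> :: "nat \<Rightarrow> real" and N :: nat
  assumes "prob_space M"
    and "\<forall>i\<in>{1..N}. \<gamma> i \<ge> 0"
    and "prob_space.indep_vars M (\<lambda>_. borel) \<Phi> {1..N}"
    and "\<forall>i\<in>{1..N}. distr M borel (\<Phi> i) = wrapped_normal (\<gamma> i)"
  shows "supermodular_on {1..N} (\<lambda>S. integral\<^sup>L M (beam_gain \<Phi> S))
         \<and> supermodular_on {1..N}
           (\<lambda>S. integral\<^sup>L M (\<lambda>\<omega>. (beam_gain \<Phi> S \<omega> - integral\<^sup>L M (beam_gain \<Phi> S))\<^sup>2))"
proof -
  interpret prob_space M
    by (rule assms(1))
  have "expectation (\<lambda>\<omega>. cis (\<Phi> i \<omega>)) = of_real (exp (- \<gamma> i / 2))" if "i \<in> {1..N}" for i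
  proof -
    have "\<Phi> i \<in> borel_measurable M"
      using assms(3) that by (simp add: indep_vars_def)
    then have "expectation (\<lambda>\<omega>. cis (\<Phi> i \<omega>)) = integral\<^sup>L (distr M borel (\<Phi> i)) cis"
      by (simp add: integral_distr)
    then show ?thesis
      using assms(2,4) that by (simp add: integral_cis_wrapped_normal)
  qed
  then interpret indep_phases M \<Phi> "{1..N}" "\<lambda>i. exp (- \<gamma> i / 2)"
    using assms(3) by unfold_locales auto
  show ?thesis
    using expectation_gain_second_difference_nonneg variance_gain_second_difference_nonneg
    by (auto intro!: supermodular_onI)
qed

end
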